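(* The set $\mathcal{L}_{ME}=\{(M,q)\mid ME[U](M)>q\}$ is an observable hyperproperty. That is, for every rational $q$, the set of programs $\{M\mid ME[U](M)>q\}$ is an observable hyperproperty.
   Context: Stores map variables to values; $H$ is the high input variable and $O$ the low output variable. A trace is a sequence of stores. For a finite trace $t$, $t\circ t'$ is concatenation. A program is a set $M$ of infinite traces that is deterministic (two traces with the same initial value of $H$ are equal) and has a finite nonempty input domain $\mathbb{H}_M=\{\sigma_0(H)\}$. Input domains are unbounded in size. $M(h)$ is the output trace $(\sigma_1(O),\sigma_2(O),\dots)$ of the trace of $M$ starting with $H=h$. $\bot$ denotes termination. $M(h)=o$ means that for all $i$, $o_i=\bot$ or $M(h)_i=\bot$ or $M(h)_i=o_i$. For a distribution $\mu$ on $\mathbb{H}_M$, $\mu(O=o)=\sum_{h:M(h)=o}\mu(H=h)$, with conditional probabilities induced accordingly. $U$ is the uniform distribution on $\mathbb{H}_M$. Min-entropy QIF (log base 2): - $\mathcal{V}[\mu](X)=\max_x\mu(X=x)$. - $\mathcal{V}[\mu](X|Y)=\sum_y\mu(Y=y)\max_x\mu(X=x|Y=y)$. - $ME[\mu](M)=\log\frac1{\mathcal{V}[\mu](H)}-\log\frac1{\mathcal{V}[\mu](H|O)}$. $\mathit{Prop}$ is the set of programs; $\mathit{Obs}$ is the set of deterministic finite sets of finite traces. For $S\in\mathit{Obs}$ and $T\in\mathit{Prop}$, $S\le T$ iff every $t\in S$ has some $t'$ with $t\circ t'\in T$. $P\subseteq\mathit{Prop}$ is observable iff for every $S\in P$ there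 is $T\in\mathit{Obs}$ with $T\le S$ such that every $S'\in\mathit{Prop}$ with $T\le S'$ is in $P$. A set $\mathcal{P}$ of pairs (program, rational) is observable iff $\{M\mid(M,q)\in\mathcal{P}\}$ is observable for every rational $q$. *)

theory Defs
  imports Complex_Main
begin

(* Variables: the high input H, the low output O, and further program variables. *)
datatype var = VH | VO | Var nat

(* Values: None plays the role of bottom (termination), Some v an ordinary (integer) value.
   The value space is infinite, so input domains are unbounded in size. *)
type_synonym val = "int option"

type_synonym store = "var \<Rightarrow> val"

type_synonym trace = "nat \<Rightarrow> store"
type_synonym ftrace = "store list"

definition conc :: "ftrace \<Rightarrow> trace \<Rightarrow> trace" where
  "conc t t' = (\<lambda>i. if i < length t then t ! i else t' (i - length t))"

definition input_dom :: "trace set \<Rightarrow> val set" where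
  "input_dom M = {t 0 VH | t. t \<in> M}"

definition deterministic :: "trace set \<Rightarrow> bool" where
  "deterministic M \<longleftrightarrow> (\<forall>t\<in>M. \<forall>t'\<in>M. t 0 VH = t' 0 VH \<longrightarrow> t = t')"

definition Prog :: "trace set set" where
  "Prog = {M. deterministic M \<and> finite (input_dom M) \<and> input_dom M \<noteq> {}}"

definition deterministic_fin :: "ftrace set \<Rightarrow> bool" where
  "deterministic_fin S \<longleftrightarrow>
     (\<forall>t\<in>S. \<forall>t'\<in>S. t \<noteq> [] \<longrightarrow> t' \<noteq> [] \<longrightarrow> (t ! 0) VH = (t' ! 0) VH \<longrightarrow> t = t')"

definition Obs :: "ftrace set set" where
  "Obs = {S. deterministic_fin S \<and> finite S}"

definition obs_le :: "ftrace set \<Rightarrow> trace set \<Rightarrow> bool" where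
  "obs_le S T \<longleftrightarrow> (\<forall>t\<in>S. \<exists>t'. conc t t' \<in> T)"

definition observable :: "trace set set \<Rightarrow> bool" where
  "observable P \<longleftrightarrow>
     (\<forall>S\<in>P. \<exists>T\<in>Obs. obs_le T S \<and> (\<forall>S'\<in>Prog. obs_le T S' \<longrightarrow> S' \<in> P))"

definition observable_pairs :: "(trace set \<times> rat) set \<Rightarrow> bool" where
  "observable_pairs P \<longleftrightarrow> (\<forall>q. observable {M. (M, q) \<in> P})"

definition trace_of :: "trace set \<Rightarrow> val \<Rightarrow> trace" where
  "trace_of M h = (THE t. t \<in> M \<and> t 0 VH = h)"

definition out :: "trace set \<Rightarrow> val \<Rightarrow> (nat \<Rightarrow> val)" where
  "out M h = (\<lambda>i. trace_of M h (Suc i) VO)"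

(* M(h) = o, with bottom (None) as wildcard *)
definition out_eq :: "(nat \<Rightarrow> val) \<Rightarrow> (nat \<Rightarrow> val) \<Rightarrow> bool" where
  "out_eq m y \<longleftrightarrow> (\<forall>i. y i = None \<or> m i = None \<or> m i = y i)"

definition mu_O :: "(val \<Rightarrow> real) \<Rightarrow> trace set \<Rightarrow> (nat \<Rightarrow> val) \<Rightarrow> real" where
  "mu_O \<mu> M y = (\<Sum>h\<in>{h \<in> input_dom M. out_eq (out M h) y}. \<mu> h)"

definition mu_HO :: "(val \<Rightarrow> real) \<Rightarrow> trace set \<Rightarrow> val \<Rightarrow> (nat \<Rightarrow> val) \<Rightarrow> real" where
  "mu_HO \<mu> M h y = (if h \<in> input_dom M \<and> out_eq (out M h) y then \<mu> h else 0)"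

definition V_H :: "(val \<Rightarrow> real) \<Rightarrow> trace set \<Rightarrow> real" where
  "V_H \<mu> M = (MAX h \<in> input_dom M. \<mu> h)"

definition V_HO :: "(val \<Rightarrow> real) \<Rightarrow> trace set \<Rightarrow> real" where
  "V_HO \<mu> M = (\<Sum>y \<in> out M ` input_dom M.
      mu_O \<mu> M y * (MAX h \<in> input_dom M. mu_HO \<mu> M h y / mu_O \<mu> M y))"

definition ME :: "(val \<Rightarrow> real) \<Rightarrow> trace set \<Rightarrow> real" where
  "ME \<mu> M = log 2 (1 / V_H \<mu> M) - log 2 (1 / V_HO \<mu> M)"

definition U :: "trace set \<Rightarrow> val \<Rightarrow> real" where
  "U M h = (if h \<in> input_dom M then 1 / real (card (input_dom M)) else 0)"

definition L_ME :: "(trace set \<times> rat) set" where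
  "L_ME = {(M, q). M \<in> Prog \<and> ME (U M) M > real_of_rat q}"

end

theory Submission
  imports Defs
begin

text \<open>Under the uniform prior the min-entropy leakage of a program is the logarithm of the
  number of its distinct outputs. Two distinct output streams already differ at some finite
  index, so observing sufficiently long prefixes of all traces of \<open>M\<close> forces every program
  extending them to produce at least as many distinct outputs as \<open>M\<close> does; its leakage is therefore
  at least that of \<open>M\<close>, and exceeding \<open>q\<close> is preserved.\<close>

lemma out_eq_refl: "out_eq m m"
  by (simp add: out_eq_def)

lemma V_H_uniform:
  assumes "M \<in> Prog"
  shows "V_H (U M) M = 1 / real (card (input_dom M))"
proof -
  have "U M ` input_dom M = {1 / real (card (input_dom M))}"
    using assms by (auto simp: Prog_def U_def)
  then show ?thesis
    by (simp add: V_H_def)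
qed

lemma uniform_posterior_vulnerability_term:
  assumes "M \<in> Prog" and "y \<in> out M ` input_dom M"
  shows "mu_O (U M) M y * (MAX h \<in> input_dom M. mu_HO (U M) M h y / mu_O (U M) M y)
           = 1 / real (card (input_dom M))"
proof -
  define D where "D = input_dom M"
  define n where "n = real (card D)"
  define m where "m = mu_O (U M) M y"
  define C where "C = {h \<in> D. out_eq (out M h) y}"
  have fin: "finite D" "D \<noteq> {}"
    using assms(1) by (auto simp: Prog_def D_def)
  have n_pos: "n > 0"
    using fin by (simp add: n_def card_gt_0_iff)
  obtain h0 where h0: "h0 \<in> D" "y = out M h0"
    using assms(2) by (auto simp: D_def)
  then have "h0 \<in> C"
    by (simp add: C_def out_eq_refl)
  then have "card C > 0"
    using fin by (auto simp: C_def card_gt_0_iff)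
  moreover have "m = real (card C) / n"
    by (simp add: m_def mu_O_def U_def C_def D_def n_def)
  ultimately have m_pos: "m > 0"
    using n_pos by simp
  have "(MAX h \<in> D. mu_HO (U M) M h y / m) = (1 / n) / m"
  proof (rule Max_eqI)
    show "finite ((\<lambda>h. mu_HO (U M) M h y / m) ` D)"
      using fin by simp
    show "(1 / n) / m \<in> (\<lambda>h. mu_HO (U M) M h y / m) ` D"
      using h0 by (force simp: mu_HO_def U_def D_def n_def out_eq_refl)
  next
    fix z assume "z \<in> (\<lambda>h. mu_HO (U M) M h y / m) ` D"
    then have "z = (1 / n) / m \<or> z = 0"
      by (auto simp: mu_HO_def U_def D_def n_def)
    then show "z \<le> (1 / n) / m"
      using n_pos m_pos by auto
  qed
  then show ?thesis
    using m_pos by (simp add: m_def D_def n_def)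
qed

lemma ME_uniform_eq_log_card_outputs:
  assumes "M \<in> Prog"
  shows "ME (U M) M = log 2 (real (card (out M ` input_dom M)))"
proof -
  define n where "n = real (card (input_dom M))"
  define k where "k = real (card (out M ` input_dom M))"
  have "n > 0" "k > 0"
    using assms by (auto simp: Prog_def n_def k_def card_gt_0_iff)
  have "V_HO (U M) M = (\<Sum>y \<in> out M ` input_dom M. 1 / n)"
    unfolding V_HO_def n_def
    by (rule sum.cong) (simp_all add: uniform_posterior_vulnerability_term[OF assms])
  then have "V_HO (U M) M = k / n"
    by (simp add: k_def)
  then have "ME (U M) M = log 2 n - log 2 (n / k)"
    by (simp add: ME_def V_H_uniform[OF assms] n_def)
  also have "\<dots> = log 2 k"
    using \<open>n > 0\<close> \<open>k > 0\<close> by (simp add: log_divide)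
  finally show ?thesis
    by (simp add: k_def)
qed

lemma trace_of_eq:
  assumes "deterministic M" and "t \<in> M"
  shows "trace_of M (t 0 VH) = t"
  unfolding trace_of_def
  by (rule the_equality) (use assms in \<open>auto simp: deterministic_def\<close>)

lemma trace_of_in:
  assumes "deterministic M" and "h \<in> input_dom M"
  shows "trace_of M h \<in> M" and "trace_of M h 0 VH = h"
proof -
  obtain t where "t \<in> M" "h = t 0 VH"
    using assms(2) by (auto simp: input_dom_def)
  then show "trace_of M h \<in> M" "trace_of M h 0 VH = h"
    using trace_of_eq[OF assms(1)] by auto
qed

lemma ex_distinguishing_horizon:
  fixes f :: "'a \<Rightarrow> nat \<Rightarrow> 'b"
  assumes "finite A"
  shows "\<exists>n. \<forall>x\<in>A. \<forall>y\<in>A. f x \<noteq> f y \<longrightarrow> (\<exists>i<n. f x i \<noteq> f y i)"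
proof -
  define idx where "idx p = (SOME i. f (fst p) i \<noteq> f (snd p) i)" for p
  define P where "P = {(x, y). x \<in> A \<and> y \<in> A \<and> f x \<noteq> f y}"
  have "finite P"
    by (rule finite_subset[of _ "A \<times> A"]) (auto simp: P_def assms)
  then obtain n where n: "\<forall>i \<in> idx ` P. i < n"
    using finite_nat_set_iff_bounded by blast
  have "\<exists>i<n. f x i \<noteq> f y i" if "x \<in> A" "y \<in> A" "f x \<noteq> f y" for x y
  proof -
    have "\<exists>i. f x i \<noteq> f y i"
      using \<open>f x \<noteq> f y\<close> by (auto simp: fun_eq_iff)
    from someI_ex[OF this] have "f x (idx (x, y)) \<noteq> f y (idx (x, y))"
      by (simp add: idx_def)
    moreover have "idx (x, y) < n"
      using n that by (auto simp: P_def)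
    ultimately show ?thesis
      by blast
  qed
  then show ?thesis
    by blast
qed

lemma card_image_le_card_image:
  assumes "\<And>x y. x \<in> A \<Longrightarrow> y \<in> A \<Longrightarrow> g x = g y \<Longrightarrow> f x = f y" and "finite A"
  shows "card (f ` A) \<le> card (g ` A)"
proof -
  have "f x = (f \<circ> inv_into A g) (g x)" if "x \<in> A" for x
    using that by (metis assms(1) comp_apply f_inv_into_f image_eqI inv_into_into)
  then have "f ` A \<subseteq> (f \<circ> inv_into A g) ` g ` A"
    by blast
  then have "card (f ` A) \<le> card ((f \<circ> inv_into A g) ` g ` A)"
    using assms(2) by (intro card_mono) auto
  also have "\<dots> \<le> card (g ` A)"
    by (rule card_image_le) (use assms(2) in simp)
  finally show ?thesis .
qed

text \<open>Output \<open>i\<close> is read from state \<open>Suc i\<close>, so prefixes of length \<open>Suc n\<close> fix the outputs below \<open>n\<close>.\<close>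

definition obs_prefix :: "trace set \<Rightarrow> nat \<Rightarrow> ftrace set" where
  "obs_prefix M n = (\<lambda>h. map (trace_of M h) [0..<Suc n]) ` input_dom M"

lemma obs_prefix_in_Obs:
  assumes "M \<in> Prog"
  shows "obs_prefix M n \<in> Obs"
proof -
  have "deterministic M" "finite (input_dom M)"
    using assms by (auto simp: Prog_def)
  then show ?thesis
    unfolding Obs_def deterministic_fin_def obs_prefix_def
    by (auto simp: trace_of_in nth_append simp del: upt_Suc)
qed

lemma conc_prefix_suffix: "conc (map t [0..<n]) (\<lambda>j. t (j + n)) = t"
  by (rule ext) (simp add: conc_def)

lemma obs_le_obs_prefix:
  assumes "deterministic M"
  shows "obs_le (obs_prefix M n) M"
  unfolding obs_le_def obs_prefix_def
  by (metis (no_types, lifting) assms conc_prefix_suffix imageE trace_of_in(1))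

lemma outputs_agree_if_obs_le_obs_prefix:
  assumes "deterministic M" and "deterministic S" and "obs_le (obs_prefix M n) S"
    and "h \<in> input_dom M"
  shows "h \<in> input_dom S" and "\<And>i. i < n \<Longrightarrow> out S h i = out M h i"
proof -
  define p where "p = map (trace_of M h) [0..<Suc n]"
  obtain t' where t': "conc p t' \<in> S"
    using assms(3,4) by (auto simp: obs_le_def obs_prefix_def p_def)
  have "conc p t' 0 VH = h"
    by (simp add: conc_def p_def trace_of_in(2)[OF assms(1,4)] del: upt_Suc)
  then have trace_S: "trace_of S h = conc p t'"
    using trace_of_eq[OF assms(2) t'] by simp
  show "h \<in> input_dom S"
    using t' \<open>conc p t' 0 VH = h\<close> unfolding input_dom_def by blast
  show "out S h i = out M h i" if "i < n" for i
    using that by (simp add: out_def trace_S conc_def p_def del: upt_Suc)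
qed

lemma card_outputs_mono_if_obs_le_obs_prefix:
  assumes "M \<in> Prog" and "S \<in> Prog" and "obs_le (obs_prefix M n) S"
    and horizon: "\<forall>x\<in>input_dom M. \<forall>y\<in>input_dom M.
                    out M x \<noteq> out M y \<longrightarrow> (\<exists>i<n. out M x i \<noteq> out M y i)"
  shows "card (out M ` input_dom M) \<le> card (out S ` input_dom S)"
proof -
  have det: "deterministic M" "deterministic S" and fin: "finite (input_dom M)"
    "finite (input_dom S)"
    using assms(1,2) by (auto simp: Prog_def)
  note agree = outputs_agree_if_obs_le_obs_prefix[OF det assms(3)]
  have "card (out M ` input_dom M) \<le> card (out S ` input_dom M)"
    by (rule card_image_le_card_image[OF _ fin(1)]) (metis agree(2) horizon)
  also have "\<dots> \<le> card (out S ` input_dom S)"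
    using agree(1) fin(2) by (intro card_mono) auto
  finally show ?thesis .
qed

theorem theorem5:
  shows "observable_pairs L_ME"
  unfolding observable_pairs_def observable_def
proof (intro allI ballI)
  fix q M assume "M \<in> {M. (M, q) \<in> L_ME}"
  then have M: "M \<in> Prog" and leak: "ME (U M) M > real_of_rat q"
    by (auto simp: L_ME_def)
  have "finite (input_dom M)"
    using M by (simp add: Prog_def)
  then obtain n where horizon: "\<forall>x\<in>input_dom M. \<forall>y\<in>input_dom M.
                             out M x \<noteq> out M y \<longrightarrow> (\<exists>i<n. out M x i \<noteq> out M y i)"
    by (metis ex_distinguishing_horizon)
  have "S \<in> {M. (M, q) \<in> L_ME}" if S: "S \<in> Prog" and le: "obs_le (obs_prefix M n) S" for S
  proof -
    have "card (out M ` input_dom M) \<le> card (out S ` input_dom S)"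
      by (rule card_outputs_mono_if_obs_le_obs_prefix[OF M S le horizon])
    moreover have "card (out M ` input_dom M) > 0"
      using M by (auto simp: Prog_def card_gt_0_iff)
    ultimately have "ME (U M) M \<le> ME (U S) S"
      by (simp add: ME_uniform_eq_log_card_outputs M S)
    then show ?thesis
      using leak S by (simp add: L_ME_def)
  qed
  moreover have "obs_le (obs_prefix M n) M"
    using M by (simp add: Prog_def obs_le_obs_prefix)
  ultimately show "\<exists>T\<in>Obs. obs_le T M \<and> (\<forall>S\<in>Prog. obs_le T S \<longrightarrow> S \<in> {M. (M, q) \<in> L_ME})"
    using obs_prefix_in_Obs[OF M] by blast
qed

end
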